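(* Let $k\geq 2$ be an even integer and let $G$ be a connected graph of order $n\geq 3$. (i) If $\lambda_1(D(G))\le \lambda_1(D(K_1\vee(K_{n-2}\cup K_1)))$ and $G\not\cong K_1\vee(K_{n-2}\cup K_1)$, then $G$ is $\mathrm{GFC}_k$ when $n$ is odd, and $G$ is $\mathrm{GBC}_k$ when $n$ is even with $n\geq 10$. (ii) If $n$ is even with $4\le n\le 8$ and $\lambda_1(D(G))\le \lambda_1(D(S_{n,\frac{n}{2}}))$, then $G$ is $\mathrm{GBC}_k$ unless $G\cong S_{n,\frac{n}{2}}$.
   Context: All graphs are finite, simple, undirected. For a connected graph $G$, $D(G)$ is its distance matrix (entry $(i,j)$ is the distance between $v_i$ and $v_j$) and $\lambda_1(D(G))$ its largest eigenvalue. $G\cup H$ is disjoint union, $G\vee H$ the join, $tK_1$ the edgeless graph on $t$ vertices, $S_{n,k}=K_k\vee(n-k)K_1$. For a graph $H$, $i(H)$ is the number of isolated vertices of $H$ and $\mathrm{odd}(H)$ the number of components of $H$ with an odd number ($\ge 3$) of vertices. The $k$-Berge–Tutte formula is $\mathrm{def}_k(G)=\max_{S\subseteq V(G)} \big(k\, i(G-S)-k|S|\big)$ if $k$ is even, and $\max_{S\subseteq V(G)}\big(\mathrm{odd}(G-S)+k\, i(G-S)-k|S|\big)$ if $k$ is odd; a set $S$ attaining the maximum is a $k$-barrier. A connected graph of odd order is $\mathrm{GFC}_k$ if it has no non-empty $k$-barrier; a connected graph of even order is $\mathrm{GBC}_k$ if it has no non-empty $k$-barrier. *)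

theory Defs
  imports Complex_Main "Jordan_Normal_Form.Char_Poly"
begin

definition graph :: "nat \<Rightarrow> (nat \<Rightarrow> nat \<Rightarrow> bool) \<Rightarrow> bool" where
  "graph n adj \<longleftrightarrow> (\<forall>u v. adj u v \<longrightarrow> u < n \<and> v < n \<and> u \<noteq> v \<and> adj v u)"

fun walk_in :: "(nat \<Rightarrow> nat \<Rightarrow> bool) \<Rightarrow> nat set \<Rightarrow> nat list \<Rightarrow> bool" where
  "walk_in adj W [] = False"
| "walk_in adj W [x] = (x \<in> W)"
| "walk_in adj W (x # y # xs) = (x \<in> W \<and> adj x y \<and> walk_in adj W (y # xs))"

definition reach_in :: "(nat \<Rightarrow> nat \<Rightarrow> bool) \<Rightarrow> nat set \<Rightarrow> nat \<Rightarrow> nat \<Rightarrow> bool" where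
  "reach_in adj W u v \<longleftrightarrow> (\<exists>xs. walk_in adj W xs \<and> hd xs = u \<and> last xs = v)"

definition connected_graph :: "nat \<Rightarrow> (nat \<Rightarrow> nat \<Rightarrow> bool) \<Rightarrow> bool" where
  "connected_graph n adj \<longleftrightarrow> graph n adj \<and> n \<ge> 1 \<and>
     (\<forall>u < n. \<forall>v < n. reach_in adj {0..<n} u v)"

definition gdist :: "nat \<Rightarrow> (nat \<Rightarrow> nat \<Rightarrow> bool) \<Rightarrow> nat \<Rightarrow> nat \<Rightarrow> nat" where
  "gdist n adj u v = (LEAST m. \<exists>xs. walk_in adj {0..<n} xs \<and> hd xs = u \<and> last xs = v
                                  \<and> length xs = Suc m)"

definition dist_matrix :: "nat \<Rightarrow> (nat \<Rightarrow> nat \<Rightarrow> bool) \<Rightarrow> real mat" where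
  "dist_matrix n adj = mat n n (\<lambda>(i, j). real (gdist n adj i j))"

text \<open>Largest eigenvalue (the distance matrix is real symmetric, so all eigenvalues are real).\<close>
definition lambda1 :: "real mat \<Rightarrow> real" where
  "lambda1 A = Max {x. eigenvalue A x}"

definition dist_spectral_radius :: "nat \<Rightarrow> (nat \<Rightarrow> nat \<Rightarrow> bool) \<Rightarrow> real" where
  "dist_spectral_radius n adj = lambda1 (dist_matrix n adj)"

definition graph_iso :: "nat \<Rightarrow> (nat \<Rightarrow> nat \<Rightarrow> bool) \<Rightarrow> (nat \<Rightarrow> nat \<Rightarrow> bool) \<Rightarrow> bool" where
  "graph_iso n adj adj' \<longleftrightarrow> (\<exists>f. bij_betw f {0..<n} {0..<n} \<and>
      (\<forall>u < n. \<forall>v < n. adj u v \<longleftrightarrow> adj' (f u) (f v)))"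

text \<open>K_1 \<or> (K_{n-2} \<union> K_1): vertex 0 is the K_1 joined to everything,
  vertices 1..n-2 form the K_{n-2}, vertex n-1 is the isolated K_1 of the union.\<close>
definition K1_join_Kn2_K1 :: "nat \<Rightarrow> nat \<Rightarrow> nat \<Rightarrow> bool" where
  "K1_join_Kn2_K1 n u v \<longleftrightarrow> u < n \<and> v < n \<and> u \<noteq> v \<and>
     (u = 0 \<or> v = 0 \<or> (u < n - 1 \<and> v < n - 1))"

text \<open>S_{n,k} = K_k \<or> (n-k)K_1: vertices 0..k-1 form the K_k.\<close>
definition S_graph :: "nat \<Rightarrow> nat \<Rightarrow> nat \<Rightarrow> nat \<Rightarrow> bool" where
  "S_graph n k u v \<longleftrightarrow> u < n \<and> v < n \<and> u \<noteq> v \<and> (u < k \<or> v < k)"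

definition isolated_count :: "nat \<Rightarrow> (nat \<Rightarrow> nat \<Rightarrow> bool) \<Rightarrow> nat set \<Rightarrow> nat" where
  "isolated_count n adj S = card {v \<in> {0..<n} - S. \<forall>u \<in> {0..<n} - S. \<not> adj v u}"

definition components :: "nat \<Rightarrow> (nat \<Rightarrow> nat \<Rightarrow> bool) \<Rightarrow> nat set \<Rightarrow> nat set set" where
  "components n adj S = (\<lambda>v. {u. reach_in adj ({0..<n} - S) v u}) ` ({0..<n} - S)"

definition odd_count :: "nat \<Rightarrow> (nat \<Rightarrow> nat \<Rightarrow> bool) \<Rightarrow> nat set \<Rightarrow> nat" where
  "odd_count n adj S = card {C \<in> components n adj S. odd (card C) \<and> card C \<ge> 3}"

definition bt_value :: "nat \<Rightarrow> nat \<Rightarrow> (nat \<Rightarrow> nat \<Rightarrow> bool) \<Rightarrow> nat set \<Rightarrow> int" where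
  "bt_value k n adj S =
     (if even k then int k * int (isolated_count n adj S) - int k * int (card S)
      else int (odd_count n adj S) + int k * int (isolated_count n adj S) - int k * int (card S))"

definition def_k :: "nat \<Rightarrow> nat \<Rightarrow> (nat \<Rightarrow> nat \<Rightarrow> bool) \<Rightarrow> int" where
  "def_k k n adj = Max (bt_value k n adj ` Pow {0..<n})"

definition k_barrier :: "nat \<Rightarrow> nat \<Rightarrow> (nat \<Rightarrow> nat \<Rightarrow> bool) \<Rightarrow> nat set \<Rightarrow> bool" where
  "k_barrier k n adj S \<longleftrightarrow> S \<subseteq> {0..<n} \<and> bt_value k n adj S = def_k k n adj"

definition GFC :: "nat \<Rightarrow> nat \<Rightarrow> (nat \<Rightarrow> nat \<Rightarrow> bool) \<Rightarrow> bool" where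
  "GFC k n adj \<longleftrightarrow> connected_graph n adj \<and> odd n \<and> \<not> (\<exists>S. S \<noteq> {} \<and> k_barrier k n adj S)"

definition GBC :: "nat \<Rightarrow> nat \<Rightarrow> (nat \<Rightarrow> nat \<Rightarrow> bool) \<Rightarrow> bool" where
  "GBC k n adj \<longleftrightarrow> connected_graph n adj \<and> even n \<and> \<not> (\<exists>S. S \<noteq> {} \<and> k_barrier k n adj S)"

end

theory Submission
  imports Defs "Jordan_Normal_Form.Spectral_Radius" "HOL-Analysis.Function_Topology"
begin

text \<open>For even \<open>k\<close> the empty set shows \<open>def\<^sub>k(G) \<ge> 0\<close>, so a nonempty \<open>k\<close>-barrier \<open>S\<close> of size
  \<open>s\<close> leaves at least \<open>s\<close> isolated vertices in \<open>G - S\<close>, and \<open>G\<close> is a spanning subgraph of a copy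
  of \<open>K\<^sub>s \<or> (K\<^sub>n\<^sub>-\<^sub>2\<^sub>s \<union> sK\<^sub>1)\<close>.  Removing edges only increases distances, and this graph has
  diameter 2, so Rayleigh's principle and the Perron--Frobenius argument give
  \<open>\<rho>(G) \<ge> \<rho>(K\<^sub>s \<or> (K\<^sub>n\<^sub>-\<^sub>2\<^sub>s \<union> sK\<^sub>1))\<close>, strictly unless \<open>G\<close> is that graph.  The extremal graphs
  of the theorem are the members \<open>s = 1\<close> and \<open>s = n/2\<close> of this family, and every other member
  (for the stated orders) has a strictly larger distance spectral radius.  This last comparison is
  certified on the \<open>3 \<times> 3\<close> quotient of the vertex partition: a test vector bounds the radius of
  each member from below, a Collatz--Wielandt vector that of the extremal member from above.\<close>

section \<open>The largest eigenvalue of a real symmetric matrix\<close>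

definition mat_apply :: "nat \<Rightarrow> (nat \<Rightarrow> nat \<Rightarrow> real) \<Rightarrow> (nat \<Rightarrow> real) \<Rightarrow> nat \<Rightarrow> real" where
  "mat_apply n M x i = (\<Sum>j<n. M i j * x j)"

definition bilinear_form :: "nat \<Rightarrow> (nat \<Rightarrow> nat \<Rightarrow> real) \<Rightarrow> (nat \<Rightarrow> real) \<Rightarrow> (nat \<Rightarrow> real) \<Rightarrow> real" where
  "bilinear_form n M x y = (\<Sum>i<n. \<Sum>j<n. x i * M i j * y j)"

definition norm_sq :: "nat \<Rightarrow> (nat \<Rightarrow> real) \<Rightarrow> real" where
  "norm_sq n x = (\<Sum>i<n. (x i)\<^sup>2)"

definition symmetric_on :: "nat \<Rightarrow> (nat \<Rightarrow> nat \<Rightarrow> real) \<Rightarrow> bool" where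
  "symmetric_on n M \<longleftrightarrow> (\<forall>i<n. \<forall>j<n. M i j = M j i)"

definition lambda_max :: "nat \<Rightarrow> (nat \<Rightarrow> nat \<Rightarrow> real) \<Rightarrow> real" where
  "lambda_max n M = lambda1 (mat n n (\<lambda>(i, j). M i j))"

lemma bilinear_form_mat_apply: "bilinear_form n M x y = (\<Sum>i<n. x i * mat_apply n M y i)"
  unfolding bilinear_form_def mat_apply_def by (simp add: sum_distrib_left mult.assoc)

lemma bilinear_form_commute:
  assumes "symmetric_on n M"
  shows "bilinear_form n M x y = bilinear_form n M y x"
proof -
  have "bilinear_form n M x y = (\<Sum>j<n. \<Sum>i<n. x i * M i j * y j)"
    unfolding bilinear_form_def by (rule sum.swap)
  also have "\<dots> = bilinear_form n M y x"
    unfolding bilinear_form_def using assms by (intro sum.cong refl) (auto simp: symmetric_on_def)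
  finally show ?thesis .
qed

lemma bilinear_form_cong:
  "(\<And>i. i < n \<Longrightarrow> x i = y i) \<Longrightarrow> bilinear_form n M x x = bilinear_form n M y y"
  unfolding bilinear_form_def by (intro sum.cong refl) auto

lemma bilinear_form_scale:
  "bilinear_form n M (\<lambda>i. c * x i) (\<lambda>i. c * x i) = c\<^sup>2 * bilinear_form n M x x"
  unfolding bilinear_form_def by (simp add: sum_distrib_left power2_eq_square algebra_simps)

lemma bilinear_form_eigenvector:
  "\<forall>i<n. mat_apply n M x i = \<mu> * x i \<Longrightarrow> bilinear_form n M x x = \<mu> * norm_sq n x"
  unfolding bilinear_form_mat_apply norm_sq_def
  by (simp add: sum_distrib_left power2_eq_square algebra_simps)

lemma norm_sq_nonneg: "norm_sq n x \<ge> 0"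
  unfolding norm_sq_def by (simp add: sum_nonneg)

lemma norm_sq_eq_0_iff: "norm_sq n x = 0 \<longleftrightarrow> (\<forall>i<n. x i = 0)"
  unfolding norm_sq_def by (subst sum_nonneg_eq_0_iff) auto

lemma norm_sq_pos_iff: "norm_sq n x > 0 \<longleftrightarrow> (\<exists>i<n. x i \<noteq> 0)"
  using norm_sq_nonneg[of n x] norm_sq_eq_0_iff[of n x] by auto

lemma norm_sq_cong: "(\<And>i. i < n \<Longrightarrow> x i = y i) \<Longrightarrow> norm_sq n x = norm_sq n y"
  unfolding norm_sq_def by (intro sum.cong refl) auto

lemma norm_sq_scale: "norm_sq n (\<lambda>i. c * x i) = c\<^sup>2 * norm_sq n x"
  unfolding norm_sq_def by (simp add: sum_distrib_left power2_eq_square algebra_simps)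

lemma rayleigh_maximiser_is_eigenvector:
  assumes sym: "symmetric_on n M"
    and bound: "\<And>x. bilinear_form n M x x \<le> \<mu> * norm_sq n x"
    and attained: "bilinear_form n M x0 x0 = \<mu> * norm_sq n x0"
    and i: "i < n"
  shows "mat_apply n M x0 i = \<mu> * x0 i"
proof -
  define h where "h i = mat_apply n M x0 i - \<mu> * x0 i" for i
  define C where "C = \<mu> * norm_sq n h - bilinear_form n M h h"
  have C: "C \<ge> 0" using bound[of h] unfolding C_def by simp
  text \<open>Along the line \<open>x0 + t h\<close> the defect \<open>\<mu> |x|\<^sup>2 - x M x\<close> is
    \<open>t\<^sup>2 C - 2 t |h|\<^sup>2\<close>, which is negative for small \<open>t > 0\<close> unless \<open>h = 0\<close>.\<close>
  have perturb: "2 * t * norm_sq n h \<le> t\<^sup>2 * C" for t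
  proof -
    let ?x = "\<lambda>i. x0 i + t * h i"
    have "bilinear_form n M ?x ?x = bilinear_form n M x0 x0 + t * bilinear_form n M x0 h
        + t * bilinear_form n M h x0 + t\<^sup>2 * bilinear_form n M h h"
      unfolding bilinear_form_def
      by (simp add: algebra_simps power2_eq_square sum.distrib sum_distrib_left)
    then have "bilinear_form n M ?x ?x = bilinear_form n M x0 x0 + 2 * t * bilinear_form n M h x0
        + t\<^sup>2 * bilinear_form n M h h"
      using bilinear_form_commute[OF sym, of x0 h] by simp
    moreover have "norm_sq n ?x = norm_sq n x0 + 2 * t * (\<Sum>i<n. h i * x0 i) + t\<^sup>2 * norm_sq n h"
      unfolding norm_sq_def
      by (simp add: algebra_simps power2_eq_square sum.distrib sum_distrib_left)
    moreover have "bilinear_form n M h x0 - \<mu> * (\<Sum>i<n. h i * x0 i) = norm_sq n h"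
      unfolding bilinear_form_mat_apply norm_sq_def h_def
      by (simp add: sum_distrib_left power2_eq_square algebra_simps sum_subtractf)
    ultimately show ?thesis
      using bound[of ?x] attained unfolding C_def by (simp add: algebra_simps)
  qed
  have "norm_sq n h = 0"
  proof (rule ccontr)
    assume "norm_sq n h \<noteq> 0"
    then have pos: "norm_sq n h > 0" using norm_sq_nonneg[of n h] by simp
    define t where "t = norm_sq n h / (C + 1)"
    have t: "t > 0" unfolding t_def using pos C by simp
    have "2 * norm_sq n h \<le> t * C"
      using perturb[of t] t by (simp add: power2_eq_square mult.assoc)
    also have "t * C < norm_sq n h" unfolding t_def using pos C by (simp add: field_simps)
    finally show False using pos by simp
  qed
  then show ?thesis using i unfolding norm_sq_eq_0_iff h_def by simp
qed

lemma rayleigh_quotient_attains_max: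
  assumes "n \<ge> 1"
  obtains x0 where "norm_sq n x0 = 1" "\<And>x. bilinear_form n M x x \<le> bilinear_form n M x0 x0 * norm_sq n x"
proof -
  define B where "B i = (if i < n then {-1..1} else {0::real})" for i
  define K where "K = PiE UNIV B \<inter> {x. norm_sq n x = 1}"
  have "compactin (product_topology (\<lambda>i. euclidean) UNIV) (PiE UNIV B)"
    unfolding compactin_PiE B_def by (auto simp: compactin_euclidean_iff)
  then have "compact (PiE UNIV B)"
    by (simp add: euclidean_product_topology compactin_euclidean_iff)
  moreover have "closed {x. norm_sq n x = 1}"
    unfolding norm_sq_def by (intro closed_Collect_eq continuous_intros) auto
  ultimately have "compact K" unfolding K_def by (rule compact_Int_closed)
  have K_iff: "x \<in> K \<longleftrightarrow> (\<forall>i\<ge>n. x i = 0) \<and> norm_sq n x = 1" for x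
  proof -
    have "\<bar>x i\<bar> \<le> 1" if "norm_sq n x = 1" "i < n" for i
    proof -
      have "(x i)\<^sup>2 \<le> norm_sq n x" unfolding norm_sq_def using that(2) by (intro member_le_sum) auto
      then show ?thesis using that(1) abs_le_square_iff[of "x i" 1] by simp
    qed
    then show ?thesis unfolding K_def B_def by (fastforce simp: abs_le_iff PiE_iff)
  qed
  have "norm_sq n (\<lambda>i. if i = 0 then 1 else 0) = (\<Sum>i<n. if i = 0 then 1 else 0)"
    unfolding norm_sq_def by (intro sum.cong) auto
  then have "(\<lambda>i. if i = 0 then 1 else 0) \<in> K" using assms unfolding K_iff by simp
  then have "K \<noteq> {}" by blast
  have "continuous_on UNIV (\<lambda>x. bilinear_form n M x x)"
    unfolding bilinear_form_def by (intro continuous_intros) auto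
  then have "continuous_on K (\<lambda>x. bilinear_form n M x x)" by (rule continuous_on_subset) simp
  then obtain x0 where x0: "x0 \<in> K" and max: "\<And>y. y \<in> K \<Longrightarrow> bilinear_form n M y y \<le> bilinear_form n M x0 x0"
    using continuous_attains_sup[OF \<open>compact K\<close> \<open>K \<noteq> {}\<close>] by blast
  have "bilinear_form n M x x \<le> bilinear_form n M x0 x0 * norm_sq n x" for x
  proof (cases "norm_sq n x = 0")
    case True
    then have "bilinear_form n M x x = bilinear_form n M (\<lambda>_. 0) (\<lambda>_. 0)"
      unfolding norm_sq_eq_0_iff by (intro bilinear_form_cong) auto
    then show ?thesis using True by (simp add: bilinear_form_def)
  next
    case False
    then have pos: "norm_sq n x > 0" using norm_sq_nonneg[of n x] by simp
    define c where "c = 1 / sqrt (norm_sq n x)"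
    define y where "y i = (if i < n then c * x i else 0)" for i
    have c2: "c\<^sup>2 = 1 / norm_sq n x" unfolding c_def using pos by (simp add: power_divide)
    have "norm_sq n y = c\<^sup>2 * norm_sq n x"
      using norm_sq_cong[of n y "\<lambda>i. c * x i"] norm_sq_scale[of n c x] unfolding y_def by simp
    then have "y \<in> K" unfolding K_iff y_def using c2 pos by simp
    moreover have "bilinear_form n M y y = c\<^sup>2 * bilinear_form n M x x"
      using bilinear_form_cong[of n y "\<lambda>i. c * x i" M] bilinear_form_scale[of n M c x]
      unfolding y_def by simp
    ultimately have "bilinear_form n M x x / norm_sq n x \<le> bilinear_form n M x0 x0"
      using max[of y] c2 by simp
    then show ?thesis using pos by (simp add: divide_le_eq)
  qed
  moreover have "norm_sq n x0 = 1" using x0 unfolding K_iff by simp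
  ultimately show ?thesis using that by blast
qed

lemma eigenvalue_mat_iff:
  "eigenvalue (mat n n (\<lambda>(i, j). M i j)) \<mu> \<longleftrightarrow>
     (\<exists>x. (\<exists>i<n. x i \<noteq> 0) \<and> (\<forall>i<n. mat_apply n M x i = \<mu> * x i))"
  (is "eigenvalue ?A _ \<longleftrightarrow> _")
proof
  assume "eigenvalue ?A \<mu>"
  then obtain v where v: "v \<in> carrier_vec n" "v \<noteq> 0\<^sub>v n" "?A *\<^sub>v v = \<mu> \<cdot>\<^sub>v v"
    unfolding eigenvalue_def eigenvector_def by auto
  have "\<exists>i<n. v $ i \<noteq> 0"
  proof (rule ccontr)
    assume "\<not> ?thesis"
    then have "v = 0\<^sub>v n" using v(1) by (intro eq_vecI) auto
    then show False using v(2) by simp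
  qed
  moreover have "mat_apply n M (\<lambda>i. v $ i) i = \<mu> * v $ i" if "i < n" for i
  proof -
    have "(?A *\<^sub>v v) $ i = (\<mu> \<cdot>\<^sub>v v) $ i" using v(3) by simp
    then show ?thesis using that v(1) by (simp add: mat_apply_def scalar_prod_def atLeast0LessThan)
  qed
  ultimately show "\<exists>x. (\<exists>i<n. x i \<noteq> 0) \<and> (\<forall>i<n. mat_apply n M x i = \<mu> * x i)" by blast
next
  assume "\<exists>x. (\<exists>i<n. x i \<noteq> 0) \<and> (\<forall>i<n. mat_apply n M x i = \<mu> * x i)"
  then obtain x where x: "\<exists>i<n. x i \<noteq> 0" "\<forall>i<n. mat_apply n M x i = \<mu> * x i" by blast
  have "vec n x \<in> carrier_vec n" "vec n x \<noteq> 0\<^sub>v n" using x(1) by (auto simp: vec_eq_iff)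
  moreover have "?A *\<^sub>v vec n x = \<mu> \<cdot>\<^sub>v vec n x"
    using x(2) by (intro eq_vecI) (auto simp: mat_apply_def scalar_prod_def atLeast0LessThan)
  ultimately show "eigenvalue ?A \<mu>" unfolding eigenvalue_def eigenvector_def dim_row_mat by blast
qed

lemma finite_eigenvalues: "finite {\<mu>. eigenvalue (mat n n (\<lambda>(i, j). M i j :: real)) \<mu>}"
  using card_finite_spectrum(1)[of "mat n n (\<lambda>(i, j). M i j)" n] unfolding spectrum_def by simp

lemma lambda_max_rayleigh_principle:
  assumes n: "n \<ge> 1" and sym: "symmetric_on n M"
  obtains x0 where "\<exists>i<n. x0 i \<noteq> 0" "\<forall>i<n. mat_apply n M x0 i = lambda_max n M * x0 i"
    and "\<And>x. bilinear_form n M x x \<le> lambda_max n M * norm_sq n x"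
proof -
  obtain x0 where x0: "norm_sq n x0 = 1"
    and max: "\<And>x. bilinear_form n M x x \<le> bilinear_form n M x0 x0 * norm_sq n x"
    using rayleigh_quotient_attains_max[OF n] by blast
  define \<mu> where "\<mu> = bilinear_form n M x0 x0"
  have eigen: "\<forall>i<n. mat_apply n M x0 i = \<mu> * x0 i"
    using rayleigh_maximiser_is_eigenvector[OF sym, of \<mu> x0] max x0
    unfolding \<mu>_def by (simp add: mult.commute)
  have nonzero: "\<exists>i<n. x0 i \<noteq> 0" using x0 norm_sq_pos_iff[of n x0] by simp
  have "\<nu> \<le> \<mu>" if ev: "eigenvalue (mat n n (\<lambda>(i, j). M i j)) \<nu>" for \<nu>
  proof -
    obtain x where x: "\<exists>i<n. x i \<noteq> 0" "\<forall>i<n. mat_apply n M x i = \<nu> * x i"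
      using ev unfolding eigenvalue_mat_iff by blast
    have "\<nu> * norm_sq n x \<le> \<mu> * norm_sq n x"
      using bilinear_form_eigenvector[OF x(2)] max[of x] unfolding \<mu>_def by simp
    then show ?thesis using x(1) norm_sq_pos_iff[of n x] by simp
  qed
  moreover have "eigenvalue (mat n n (\<lambda>(i, j). M i j)) \<mu>"
    unfolding eigenvalue_mat_iff using eigen nonzero by blast
  ultimately have "lambda_max n M = \<mu>"
    unfolding lambda_max_def lambda1_def by (intro Max_eqI finite_eigenvalues) auto
  then show ?thesis using that nonzero eigen max unfolding \<mu>_def by (simp add: mult.commute)
qed

lemma lambda_max_rayleigh:
  "n \<ge> 1 \<Longrightarrow> symmetric_on n M \<Longrightarrow> bilinear_form n M x x \<le> lambda_max n M * norm_sq n x"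
  by (metis lambda_max_rayleigh_principle)

lemma lambda_max_cong:
  "(\<And>i j. i < n \<Longrightarrow> j < n \<Longrightarrow> M i j = M' i j) \<Longrightarrow> lambda_max n M = lambda_max n M'"
  unfolding lambda_max_def by (rule arg_cong[where f = lambda1]) (intro eq_matI, auto)

lemma eigenvalue_mat_permute:
  fixes M M' :: "nat \<Rightarrow> nat \<Rightarrow> real"
  assumes f: "bij_betw f {..<n} {..<n}" and M: "\<And>i j. i < n \<Longrightarrow> j < n \<Longrightarrow> M' (f i) (f j) = M i j"
    and ev: "eigenvalue (mat n n (\<lambda>(i, j). M i j)) \<nu>"
  shows "eigenvalue (mat n n (\<lambda>(i, j). M' i j)) \<nu>"
proof -
  obtain x where x: "\<exists>i<n. x i \<noteq> 0" "\<forall>i<n. mat_apply n M x i = \<nu> * x i"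
    using ev unfolding eigenvalue_mat_iff by blast
  define g where "g = inv_into {..<n} f"
  have gf: "g (f i) = i" if "i < n" for i
    unfolding g_def using f that by (simp add: bij_betw_def inv_into_f_f)
  have fg: "f (g k) = k" "g k < n" if "k < n" for k
    using f bij_betw_apply[OF bij_betw_inv_into[OF f]] that
    unfolding g_def by (auto simp: bij_betw_def f_inv_into_f)
  have f_lt: "f i < n" if "i < n" for i using f that by (auto simp: bij_betw_def)
  define y where "y k = x (g k)" for k
  have "\<exists>k<n. y k \<noteq> 0" using x(1) f_lt gf unfolding y_def by metis
  moreover have "mat_apply n M' y k = \<nu> * y k" if k: "k < n" for k
  proof -
    obtain i where i: "i < n" "k = f i" using fg k by metis
    have "mat_apply n M' y k = (\<Sum>j<n. M' (f i) (f j) * y (f j))"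
      unfolding mat_apply_def i(2) using sum.reindex_bij_betw[OF f, of "\<lambda>j. M' (f i) j * y j"] by simp
    also have "\<dots> = mat_apply n M x i"
      unfolding mat_apply_def using M i gf unfolding y_def by (intro sum.cong) auto
    finally show ?thesis using x(2) i gf unfolding y_def by simp
  qed
  ultimately show ?thesis unfolding eigenvalue_mat_iff by blast
qed

lemma lambda_max_permute:
  fixes M M' :: "nat \<Rightarrow> nat \<Rightarrow> real"
  assumes f: "bij_betw f {..<n} {..<n}" and M: "\<And>i j. i < n \<Longrightarrow> j < n \<Longrightarrow> M' (f i) (f j) = M i j"
  shows "lambda_max n M' = lambda_max n M"
proof -
  define g where "g = inv_into {..<n} f"
  have g: "bij_betw g {..<n} {..<n}" unfolding g_def by (rule bij_betw_inv_into[OF f])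
  have "f (g k) = k" "g k < n" if "k < n" for k
    using f bij_betw_apply[OF g] that unfolding g_def by (auto simp: bij_betw_def f_inv_into_f)
  then have M': "M (g i) (g j) = M' i j" if "i < n" "j < n" for i j
    using M[of "g i" "g j"] that by simp
  have "{\<nu>. eigenvalue (mat n n (\<lambda>(i, j). M i j)) \<nu>} = {\<nu>. eigenvalue (mat n n (\<lambda>(i, j). M' i j)) \<nu>}"
    using eigenvalue_mat_permute[where M = M and M' = M', OF f M]
      eigenvalue_mat_permute[where M = M' and M' = M, OF g M'] by blast
  then show ?thesis unfolding lambda_max_def lambda1_def by simp
qed

text \<open>The Perron--Frobenius argument: \<open>|x|\<close> is again a Rayleigh maximiser, hence an
  eigenvector, and an eigenvector of a matrix with positive off-diagonal part that is
  nonnegative and nonzero must be positive.\<close>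

lemma lambda_max_positive_eigenvector:
  assumes n: "n \<ge> 1" and sym: "symmetric_on n M"
    and nonneg: "\<And>i j. i < n \<Longrightarrow> j < n \<Longrightarrow> M i j \<ge> 0"
    and pos: "\<And>i j. i < n \<Longrightarrow> j < n \<Longrightarrow> i \<noteq> j \<Longrightarrow> M i j > 0"
  obtains w where "\<And>i. i < n \<Longrightarrow> w i > 0" "bilinear_form n M w w = lambda_max n M * norm_sq n w"
proof -
  let ?L = "lambda_max n M"
  obtain x where x: "\<exists>i<n. x i \<noteq> 0" "\<forall>i<n. mat_apply n M x i = ?L * x i"
    and rayleigh: "\<And>y. bilinear_form n M y y \<le> ?L * norm_sq n y"
    using lambda_max_rayleigh_principle[OF n sym] by metis
  define w where "w i = \<bar>x i\<bar>" for i
  have "norm_sq n w = norm_sq n x" unfolding norm_sq_def w_def by simp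
  moreover have "bilinear_form n M x x \<le> bilinear_form n M w w"
    unfolding bilinear_form_def w_def
    by (intro sum_mono) (use nonneg in \<open>auto simp: abs_mult intro: order.trans[OF abs_ge_self]\<close>)
  ultimately have attained: "bilinear_form n M w w = ?L * norm_sq n w"
    using bilinear_form_eigenvector[OF x(2)] rayleigh[of w] by simp
  have eigen: "mat_apply n M w i = ?L * w i" if "i < n" for i
    using rayleigh_maximiser_is_eigenvector[OF sym rayleigh attained that] .
  obtain j where j: "j < n" "x j \<noteq> 0" using x(1) by blast
  have "w i > 0" if i: "i < n" for i
  proof (rule ccontr)
    assume "\<not> w i > 0"
    then have "w i = 0" "i \<noteq> j" using j unfolding w_def by auto
    have "0 < M i j * w j" using pos[OF i j(1) \<open>i \<noteq> j\<close>] j unfolding w_def by simp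
    also have "\<dots> \<le> mat_apply n M w i"
      unfolding mat_apply_def using j nonneg[OF i] unfolding w_def
      by (intro member_le_sum) auto
    finally show False using eigen[OF i] \<open>w i = 0\<close> by simp
  qed
  then show ?thesis using that attained by blast
qed

lemma lambda_max_strict_mono:
  assumes n: "n \<ge> 1" and sym: "symmetric_on n M" "symmetric_on n M'"
    and nonneg: "\<And>i j. i < n \<Longrightarrow> j < n \<Longrightarrow> M i j \<ge> 0"
    and pos: "\<And>i j. i < n \<Longrightarrow> j < n \<Longrightarrow> i \<noteq> j \<Longrightarrow> M i j > 0"
    and le: "\<And>i j. i < n \<Longrightarrow> j < n \<Longrightarrow> M i j \<le> M' i j"
    and less: "i0 < n" "j0 < n" "M i0 j0 < M' i0 j0"
  shows "lambda_max n M < lambda_max n M'"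
proof -
  obtain w where w: "\<And>i. i < n \<Longrightarrow> w i > 0" "bilinear_form n M w w = lambda_max n M * norm_sq n w"
    using lambda_max_positive_eigenvector[of n M] n sym(1) nonneg pos by blast
  have term_le: "w i * M i j * w j \<le> w i * M' i j * w j" if "i < n" "j < n" for i j
    using le[OF that] w(1)[OF that(1)] w(1)[OF that(2)] by simp
  have "(\<Sum>j<n. w i0 * M i0 j * w j) < (\<Sum>j<n. w i0 * M' i0 j * w j)"
    using less w(1) term_le by (intro sum_strict_mono_ex1) auto
  then have "bilinear_form n M w w < bilinear_form n M' w w"
    unfolding bilinear_form_def using less(1) term_le
    by (intro sum_strict_mono_ex1) (auto intro: sum_mono)
  also have "\<dots> \<le> lambda_max n M' * norm_sq n w" by (rule lambda_max_rayleigh[OF n sym(2)])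
  finally show ?thesis using w norm_sq_pos_iff[of n w] less(1) by fastforce
qed

lemma lambda_max_le_Collatz_Wielandt:
  assumes n: "n \<ge> 1" and sym: "symmetric_on n M"
    and nonneg: "\<And>i j. i < n \<Longrightarrow> j < n \<Longrightarrow> M i j \<ge> 0"
    and y: "\<And>i. i < n \<Longrightarrow> y i > 0"
    and rows: "\<And>i. i < n \<Longrightarrow> mat_apply n M y i \<le> U * y i"
  shows "lambda_max n M \<le> U"
proof -
  let ?L = "lambda_max n M"
  obtain x where x: "\<exists>i<n. x i \<noteq> 0" "\<forall>i<n. mat_apply n M x i = ?L * x i"
    using lambda_max_rayleigh_principle[OF n sym] by metis
  define q where "q i = \<bar>x i\<bar> / y i" for i
  obtain i0 where i0: "i0 < n" and q_max: "\<And>i. i < n \<Longrightarrow> q i \<le> q i0"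
    using n Max_in[of "q ` {..<n}"] Max_ge[of "q ` {..<n}"] by fastforce
  have x_le: "\<bar>x j\<bar> \<le> q i0 * y j" if "j < n" for j
    using q_max[OF that] y[OF that] unfolding q_def by (simp add: divide_le_eq)
  have "q i0 > 0"
    using x(1) q_max y unfolding q_def by (meson zero_less_abs_iff divide_pos_pos order_less_le_trans)
  then have x_i0: "\<bar>x i0\<bar> > 0" using y[OF i0] unfolding q_def by (simp add: zero_less_divide_iff)
  have "\<bar>?L\<bar> * \<bar>x i0\<bar> = \<bar>mat_apply n M x i0\<bar>" using x(2) i0 by (simp add: abs_mult)
  also have "\<dots> \<le> (\<Sum>j<n. M i0 j * \<bar>x j\<bar>)" unfolding mat_apply_def
    using nonneg[OF i0] by (auto intro: order.trans[OF sum_abs] sum_mono simp: abs_mult)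
  also have "\<dots> \<le> (\<Sum>j<n. M i0 j * (q i0 * y j))"
    using x_le nonneg[OF i0] by (intro sum_mono mult_left_mono) auto
  also have "\<dots> = q i0 * mat_apply n M y i0"
    unfolding mat_apply_def by (simp add: sum_distrib_left algebra_simps)
  also have "\<dots> \<le> q i0 * (U * y i0)" using rows[OF i0] \<open>q i0 > 0\<close> by simp
  also have "\<dots> = U * \<bar>x i0\<bar>" using y[OF i0] unfolding q_def by simp
  finally show ?thesis using x_i0 by simp
qed

section \<open>Distances and the two-step matrix\<close>

lemma walk_in_nonempty: "walk_in adj W xs \<Longrightarrow> xs \<noteq> []"
  by (cases xs) auto

lemma walk_in_snoc:
  "walk_in adj W xs \<Longrightarrow> adj (last xs) y \<Longrightarrow> y \<in> W \<Longrightarrow> walk_in adj W (xs @ [y])"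
  by (induction adj W xs rule: walk_in.induct) auto

lemma walk_in_rev:
  assumes sym: "\<And>u v. adj u v \<Longrightarrow> adj v u"
  shows "walk_in adj W xs \<Longrightarrow> walk_in adj W (rev xs)"
proof (induction xs rule: induct_list012)
  case (3 x y xs)
  then have "walk_in adj W (rev (y # xs) @ [x])"
    by (intro walk_in_snoc) (auto intro: sym)
  then show ?case by simp
qed auto

lemma walk_in_length_1: "walk_in adj W xs \<Longrightarrow> length xs = 1 \<Longrightarrow> hd xs = last xs"
  by (cases xs) auto

lemma walk_in_length_2: "walk_in adj W xs \<Longrightarrow> length xs = 2 \<Longrightarrow> adj (hd xs) (last xs)"
  by (induction adj W xs rule: walk_in.induct) auto

lemma gdist_commute:
  assumes "graph n adj"
  shows "gdist n adj u v = gdist n adj v u"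
proof -
  have sym: "\<And>u v. adj u v \<Longrightarrow> adj v u" using assms unfolding graph_def by blast
  let ?P = "\<lambda>u v m. \<exists>xs. walk_in adj {0..<n} xs \<and> hd xs = u \<and> last xs = v \<and> length xs = Suc m"
  have reverse: "?P v u m" if walk: "?P u v m" for u v m
  proof -
    obtain xs where xs: "walk_in adj {0..<n} xs" "hd xs = u" "last xs = v" "length xs = Suc m"
      using walk by blast
    then show ?thesis using walk_in_rev[OF sym xs(1)] walk_in_nonempty[OF xs(1)]
      by (intro exI[of _ "rev xs"]) (auto simp: hd_rev last_rev)
  qed
  have "?P u v m \<longleftrightarrow> ?P v u m" for m using reverse[of u v m] reverse[of v u m] by blast
  then show ?thesis unfolding gdist_def by simp
qed

definition two_step_matrix :: "(nat \<Rightarrow> nat \<Rightarrow> bool) \<Rightarrow> nat \<Rightarrow> nat \<Rightarrow> real" where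
  "two_step_matrix adj i j = (if i = j then 0 else if adj i j then 1 else 2)"

lemma symmetric_on_two_step_matrix:
  "(\<And>u v. adj u v \<Longrightarrow> adj v u) \<Longrightarrow> symmetric_on n (two_step_matrix adj)"
  unfolding symmetric_on_def two_step_matrix_def by auto

lemma two_step_matrix_antimono:
  "(\<And>u v. adj u v \<Longrightarrow> adj' u v) \<Longrightarrow> two_step_matrix adj' i j \<le> two_step_matrix adj i j"
  unfolding two_step_matrix_def by auto

lemma two_step_matrix_le_gdist:
  assumes "reach_in adj {0..<n} i j"
  shows "two_step_matrix adj i j \<le> gdist n adj i j"
proof -
  let ?P = "\<lambda>m. \<exists>xs. walk_in adj {0..<n} xs \<and> hd xs = i \<and> last xs = j \<and> length xs = Suc m"
  obtain xs where "walk_in adj {0..<n} xs" "hd xs = i" "last xs = j"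
    using assms unfolding reach_in_def by blast
  then have "?P (length xs - 1)" using walk_in_nonempty by (intro exI[of _ xs]) fastforce
  then have "?P (gdist n adj i j)" unfolding gdist_def by (rule LeastI)
  then obtain ys where ys: "walk_in adj {0..<n} ys" "hd ys = i" "last ys = j"
    and len: "length ys = Suc (gdist n adj i j)" by blast
  have "gdist n adj i j \<noteq> 0" if "i \<noteq> j" using walk_in_length_1[OF ys(1)] ys len that by auto
  moreover have "gdist n adj i j \<noteq> 1" if "\<not> adj i j" using walk_in_length_2[OF ys(1)] ys len that by auto
  ultimately have "i \<noteq> j \<Longrightarrow> gdist n adj i j \<ge> 1" "i \<noteq> j \<Longrightarrow> \<not> adj i j \<Longrightarrow> gdist n adj i j \<ge> 2"
    by fastforce+
  then show ?thesis unfolding two_step_matrix_def by auto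
qed

lemma gdist_eq_two_step_matrix:
  assumes g: "graph n adj" and i: "i < n" and j: "j < n"
    and common_neighbour: "i \<noteq> j \<Longrightarrow> \<not> adj i j \<Longrightarrow> \<exists>w. adj i w \<and> adj w j"
  shows "gdist n adj i j = two_step_matrix adj i j"
proof -
  have in_range: "u < n" "v < n" if "adj u v" for u v using g that unfolding graph_def by auto
  obtain xs where xs: "walk_in adj {0..<n} xs" "hd xs = i" "last xs = j"
    and len: "length xs = Suc (nat \<lceil>two_step_matrix adj i j\<rceil>)"
  proof (cases "i = j")
    case True
    then show ?thesis using that[of "[i]"] i by (simp add: two_step_matrix_def)
  next
    case False
    show ?thesis
    proof (cases "adj i j")
      case True
      then show ?thesis using that[of "[i, j]"] False in_range by (simp add: two_step_matrix_def)
    next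
      case nonadjacent: False
      then obtain w where "adj i w" "adj w j" using common_neighbour False by blast
      then show ?thesis using that[of "[i, w, j]"] False nonadjacent in_range
        by (simp add: two_step_matrix_def)
    qed
  qed
  then have "gdist n adj i j \<le> nat \<lceil>two_step_matrix adj i j\<rceil>"
    unfolding gdist_def by (intro Least_le exI[of _ xs]) simp
  moreover have "reach_in adj {0..<n} i j" using xs unfolding reach_in_def by blast
  then have "two_step_matrix adj i j \<le> gdist n adj i j" by (rule two_step_matrix_le_gdist)
  moreover have "two_step_matrix adj i j \<in> {0, 1, 2}" unfolding two_step_matrix_def by simp
  ultimately show ?thesis by auto
qed

lemma dist_spectral_radius_lambda_max:
  "dist_spectral_radius n adj = lambda_max n (\<lambda>i j. real (gdist n adj i j))"
  unfolding dist_spectral_radius_def dist_matrix_def lambda_max_def by simp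

lemma symmetric_on_gdist: "graph n adj \<Longrightarrow> symmetric_on n (\<lambda>i j. real (gdist n adj i j))"
  unfolding symmetric_on_def by (simp add: gdist_commute)

text \<open>Entrywise, the distance matrix of a connected graph dominates the two-step matrix of every
  supergraph.\<close>

lemma dist_spectral_radius_ge_two_step_form:
  assumes G: "connected_graph n adj" and sub: "\<And>u v. adj u v \<Longrightarrow> adj' u v"
    and x: "\<And>i. i < n \<Longrightarrow> x i \<ge> 0"
  shows "bilinear_form n (two_step_matrix adj') x x \<le> dist_spectral_radius n adj * norm_sq n x"
proof -
  have g: "graph n adj" and n: "n \<ge> 1" and reach: "\<And>i j. i < n \<Longrightarrow> j < n \<Longrightarrow> reach_in adj {0..<n} i j"
    using G unfolding connected_graph_def by auto
  have "two_step_matrix adj' i j \<le> gdist n adj i j" if "i < n" "j < n" for i j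
    using two_step_matrix_antimono[where adj = adj and adj' = adj' and i = i and j = j, OF sub]
      two_step_matrix_le_gdist[OF reach[OF that]] by linarith
  then have "bilinear_form n (two_step_matrix adj') x x \<le> bilinear_form n (\<lambda>i j. real (gdist n adj i j)) x x"
    unfolding bilinear_form_def using x by (intro sum_mono) (simp add: mult_left_mono mult_right_mono)
  also have "\<dots> \<le> dist_spectral_radius n adj * norm_sq n x"
    unfolding dist_spectral_radius_lambda_max by (rule lambda_max_rayleigh[OF n symmetric_on_gdist[OF g]])
  finally show ?thesis .
qed

lemma dist_spectral_radius_gt_two_step:
  assumes G: "connected_graph n adj" and sub: "\<And>u v. adj u v \<Longrightarrow> adj' u v"
    and H: "graph n adj'" and proper: "u < n" "v < n" "adj' u v" "\<not> adj u v"
  shows "lambda_max n (two_step_matrix adj') < dist_spectral_radius n adj"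
  unfolding dist_spectral_radius_lambda_max
proof (rule lambda_max_strict_mono)
  have g: "graph n adj" and reach: "\<And>i j. i < n \<Longrightarrow> j < n \<Longrightarrow> reach_in adj {0..<n} i j"
    using G unfolding connected_graph_def by auto
  show "n \<ge> 1" using G unfolding connected_graph_def by auto
  show "symmetric_on n (two_step_matrix adj')"
    using H unfolding graph_def by (intro symmetric_on_two_step_matrix) blast
  show "symmetric_on n (\<lambda>i j. real (gdist n adj i j))" using g by (rule symmetric_on_gdist)
  have le: "two_step_matrix adj' i j \<le> gdist n adj i j" if "i < n" "j < n" for i j
    using two_step_matrix_antimono[where adj = adj and adj' = adj' and i = i and j = j, OF sub]
      two_step_matrix_le_gdist[OF reach[OF that]] by linarith
  then show "\<And>i j. i < n \<Longrightarrow> j < n \<Longrightarrow> two_step_matrix adj' i j \<le> gdist n adj i j" .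
  have "two_step_matrix adj' u v < two_step_matrix adj u v"
    using proper H unfolding two_step_matrix_def graph_def by auto
  then show "two_step_matrix adj' u v < gdist n adj u v"
    using two_step_matrix_le_gdist[OF reach[OF proper(1,2)]] by linarith
qed (auto simp: two_step_matrix_def intro: proper)

section \<open>The graphs \<open>K\<^sub>s \<or> (K\<^sub>c \<union> sK\<^sub>1)\<close>\<close>

text \<open>For disjoint \<open>S, I \<subseteq> {..<n}\<close> of size \<open>s\<close> this is \<open>K\<^sub>s \<or> (K\<^sub>c \<union> sK\<^sub>1)\<close>, with the \<open>K\<^sub>s\<close> on \<open>S\<close>
  and the \<open>sK\<^sub>1\<close> on \<open>I\<close>.\<close>

definition barrier_graph :: "nat \<Rightarrow> nat set \<Rightarrow> nat set \<Rightarrow> nat \<Rightarrow> nat \<Rightarrow> bool" where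
  "barrier_graph n S I u v \<longleftrightarrow> u < n \<and> v < n \<and> u \<noteq> v \<and> (u \<in> S \<or> v \<in> S \<or> (u \<notin> I \<and> v \<notin> I))"

lemma graph_barrier_graph: "graph n (barrier_graph n S I)"
  unfolding graph_def barrier_graph_def by auto

lemma K1_join_Kn2_K1_eq_barrier_graph: "n \<ge> 2 \<Longrightarrow> K1_join_Kn2_K1 n = barrier_graph n {0} {n - 1}"
  unfolding K1_join_Kn2_K1_def barrier_graph_def by (intro ext) auto

lemma S_graph_eq_barrier_graph: "S_graph n k = barrier_graph n {..<k} {k..<n}"
  unfolding S_graph_def barrier_graph_def by (intro ext) auto

lemma dist_spectral_radius_barrier_graph:
  assumes "S \<subseteq> {..<n}" "S \<noteq> {}"
  shows "dist_spectral_radius n (barrier_graph n S I) = lambda_max n (two_step_matrix (barrier_graph n S I))"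
  unfolding dist_spectral_radius_lambda_max
proof (rule lambda_max_cong)
  fix i j assume ij: "i < n" "j < n"
  obtain w where w: "w \<in> S" "w < n" using assms by blast
  show "gdist n (barrier_graph n S I) i j = two_step_matrix (barrier_graph n S I) i j"
    by (rule gdist_eq_two_step_matrix[OF graph_barrier_graph ij])
      (use w ij in \<open>auto simp: barrier_graph_def intro!: exI[of _ w]\<close>)
qed

lemma barrier_graph_permute:
  assumes f: "bij_betw f {..<n} {..<n}" and "S \<subseteq> {..<n}" "I \<subseteq> {..<n}"
    and "f ` S = S'" "f ` I = I'" and "u < n" "v < n"
  shows "barrier_graph n S I u v \<longleftrightarrow> barrier_graph n S' I' (f u) (f v)"
proof -
  have inj: "inj_on f {..<n}" and onto: "f ` {..<n} = {..<n}" using f by (auto simp: bij_betw_def)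
  have "f x \<in> S' \<longleftrightarrow> x \<in> S" "f x \<in> I' \<longleftrightarrow> x \<in> I" if "x < n" for x
    using assms that inj unfolding inj_on_def by auto
  moreover have "f u = f v \<longleftrightarrow> u = v" using inj assms unfolding inj_on_def by auto
  ultimately show ?thesis using assms onto unfolding barrier_graph_def by auto
qed

lemma card_lessThan_Diff_disjoint:
  assumes "A \<subseteq> {..<n}" "B \<subseteq> {..<n}" "A \<inter> B = {}"
  shows "card ({..<n} - A - B) = n - card A - card B"
proof -
  have "finite A" "finite B" using assms finite_subset by blast+
  moreover have "{..<n} - A - B = {..<n} - (A \<union> B)" by blast
  ultimately show ?thesis using assms by (simp add: card_Diff_subset card_Un_disjoint)
qed

lemma exists_bij_betw_parts:
  fixes S I S' I' :: "nat set"
  assumes "S \<subseteq> {..<n}" "I \<subseteq> {..<n}" "S \<inter> I = {}"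
    and "S' \<subseteq> {..<n}" "I' \<subseteq> {..<n}" "S' \<inter> I' = {}"
    and card: "card S = card S'" "card I = card I'"
  obtains f where "bij_betw f {..<n} {..<n}" "f ` S = S'" "f ` I = I'"
proof -
  define C where "C = {..<n} - S - I"
  define C' where "C' = {..<n} - S' - I'"
  have finite: "finite S" "finite I" "finite S'" "finite I'"
    using assms finite_subset by blast+
  have "card C = n - card S - card I" "card C' = n - card S' - card I'"
    unfolding C_def C'_def using assms by (simp_all add: card_lessThan_Diff_disjoint)
  then have "card C = card C'" using card by simp
  then obtain h where h: "bij_betw h C C'" by (metis C_def C'_def finite_Diff finite_lessThan finite_same_card_bij)
  obtain f1 where f1: "bij_betw f1 S S'" using finite card by (metis finite_same_card_bij)
  obtain f2 where f2: "bij_betw f2 I I'" using finite card by (metis finite_same_card_bij)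
  define f where "f x = (if x \<in> S then f1 x else if x \<in> I then f2 x else h x)" for x
  have "bij_betw f S S'" using f1 by (rule bij_betw_cong[THEN iffD1, rotated]) (simp add: f_def)
  moreover have "bij_betw f I I'" using f2 assms(3) by (subst bij_betw_cong[of I f f2]) (auto simp: f_def)
  moreover have "bij_betw f C C'" using h by (subst bij_betw_cong[of C f h]) (auto simp: f_def C_def)
  ultimately have "bij_betw f (S \<union> I \<union> C) (S' \<union> I' \<union> C')"
    using assms(6) by (intro bij_betw_combine) (auto simp: C'_def)
  moreover have "S \<union> I \<union> C = {..<n}" "S' \<union> I' \<union> C' = {..<n}"
    using assms unfolding C_def C'_def by auto
  ultimately show ?thesis
    using that \<open>bij_betw f S S'\<close> \<open>bij_betw f I I'\<close> by (simp add: bij_betw_def)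
qed

lemma lambda_max_two_step_matrix_iso:
  assumes f: "bij_betw f {..<n} {..<n}" and iso: "\<And>u v. u < n \<Longrightarrow> v < n \<Longrightarrow> adj u v \<longleftrightarrow> adj' (f u) (f v)"
  shows "lambda_max n (two_step_matrix adj') = lambda_max n (two_step_matrix adj)"
proof (rule lambda_max_permute[OF f])
  fix i j assume "i < n" "j < n"
  moreover have "f i = f j \<longleftrightarrow> i = j" using f \<open>i < n\<close> \<open>j < n\<close> by (auto simp: bij_betw_def inj_on_def)
  ultimately show "two_step_matrix adj' (f i) (f j) = two_step_matrix adj i j"
    using iso unfolding two_step_matrix_def by simp
qed

lemma nonempty_k_barrier_subgraph_barrier_graph:
  assumes g: "graph n adj" and k: "even k" "0 < k"
    and S: "S \<noteq> {}" and barrier: "k_barrier k n adj S"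
  obtains I where "S \<subseteq> {..<n}" "I \<subseteq> {..<n}" "S \<inter> I = {}" "card I = card S"
    "\<And>u v. adj u v \<Longrightarrow> barrier_graph n S I u v"
proof -
  have S_sub: "S \<subseteq> {..<n}" using barrier unfolding k_barrier_def by auto
  have "bt_value k n adj {} \<le> def_k k n adj" unfolding def_k_def by (intro Max_ge) auto
  also have "\<dots> = bt_value k n adj S" using barrier unfolding k_barrier_def by simp
  finally have "int k * int (isolated_count n adj {}) \<le> int k * int (isolated_count n adj S) - int k * int (card S)"
    using k(1) by (simp add: bt_value_def)
  moreover have "0 \<le> int k * int (isolated_count n adj {})" by simp
  ultimately have "int k * int (card S) \<le> int k * int (isolated_count n adj S)" by linarith
  then have "card S \<le> isolated_count n adj S" using k(2) by simp
  define Iso where "Iso = {v \<in> {0..<n} - S. \<forall>u \<in> {0..<n} - S. \<not> adj v u}"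
  obtain I where I: "I \<subseteq> Iso" "card I = card S"
    using \<open>card S \<le> isolated_count n adj S\<close> unfolding isolated_count_def Iso_def[symmetric]
    by (rule obtain_subset_with_card_n)
  have "barrier_graph n S I u v" if "adj u v" for u v
    using g that I(1) unfolding graph_def barrier_graph_def Iso_def by fastforce
  moreover have "I \<subseteq> {..<n}" "S \<inter> I = {}" using I unfolding Iso_def by auto
  ultimately show ?thesis using that S_sub I(2) by blast
qed

lemma sum_const_off_point:
  assumes "finite P"
  shows "(\<Sum>j\<in>P. if j = i then 0 else K) = (real (card P) - (if i \<in> P then 1 else 0)) * K"
proof -
  have "(\<Sum>j\<in>P. if j = i then 0 else K) = (\<Sum>j\<in>P - {i}. K)"
    using assms by (intro sum.mono_neutral_cong_right) auto
  also have "\<dots> = (real (card P) - (if i \<in> P then 1 else 0)) * K"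
    using assms card_gt_0_iff[of P]
    by (cases "i \<in> P") (auto simp: card_Diff_singleton Suc_le_eq of_nat_diff)
  finally show ?thesis .
qed

text \<open>The rows, at a vector taking the values \<open>a, b, d\<close> on \<open>S\<close>, the rest and \<open>I\<close>, of the
  two-step matrix of \<open>K\<^sub>s \<or> (K\<^sub>c \<union> sK\<^sub>1)\<close>, i.e. of its quotient matrix for this partition.\<close>

definition quot_row_S :: "nat \<Rightarrow> nat \<Rightarrow> real \<Rightarrow> real \<Rightarrow> real \<Rightarrow> real" where
  "quot_row_S s c a b d = (real s - 1) * a + real c * b + real s * d"

definition quot_row_C :: "nat \<Rightarrow> nat \<Rightarrow> real \<Rightarrow> real \<Rightarrow> real \<Rightarrow> real" where
  "quot_row_C s c a b d = real s * a + (real c - 1) * b + 2 * real s * d"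

definition quot_row_I :: "nat \<Rightarrow> nat \<Rightarrow> real \<Rightarrow> real \<Rightarrow> real \<Rightarrow> real" where
  "quot_row_I s c a b d = real s * a + 2 * real c * b + 2 * (real s - 1) * d"

definition quot_form :: "nat \<Rightarrow> nat \<Rightarrow> real \<Rightarrow> real \<Rightarrow> real \<Rightarrow> real" where
  "quot_form s c a b d =
     real s * a * quot_row_S s c a b d + real c * b * quot_row_C s c a b d + real s * d * quot_row_I s c a b d"

definition quot_norm :: "nat \<Rightarrow> nat \<Rightarrow> real \<Rightarrow> real \<Rightarrow> real \<Rightarrow> real" where
  "quot_norm s c a b d = real s * a\<^sup>2 + real c * b\<^sup>2 + real s * d\<^sup>2"

lemma quot_norm_nonneg: "quot_norm s c a b d \<ge> 0"
  unfolding quot_norm_def by simp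

definition part_vector :: "nat set \<Rightarrow> nat set \<Rightarrow> real \<Rightarrow> real \<Rightarrow> real \<Rightarrow> nat \<Rightarrow> real" where
  "part_vector S I a b d i = (if i \<in> S then a else if i \<in> I then d else b)"

locale barrier_partition =
  fixes n :: nat and S I :: "nat set" and s c :: nat
  assumes S_sub: "S \<subseteq> {..<n}" and I_sub: "I \<subseteq> {..<n}" and disjoint: "S \<inter> I = {}"
    and card_S: "card S = s" and card_I: "card I = s" and order: "n = 2 * s + c"
begin

definition C where "C = {..<n} - S - I"

lemma finite_parts: "finite S" "finite I" "finite C"
  using S_sub I_sub finite_subset unfolding C_def by auto

lemma card_C: "card C = c"
  unfolding C_def using card_lessThan_Diff_disjoint[OF S_sub I_sub disjoint] card_S card_I order by simp

lemma sum_parts: "(\<Sum>j<n. g j) = (\<Sum>j\<in>S. g j) + (\<Sum>j\<in>I. g j) + (\<Sum>j\<in>C. g j)"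
proof -
  have "{..<n} = S \<union> I \<union> C" using S_sub I_sub unfolding C_def by auto
  moreover have "(S \<union> I) \<inter> C = {}" unfolding C_def by auto
  ultimately show ?thesis using finite_parts disjoint by (simp add: sum.union_disjoint)
qed

lemma mat_apply_part_vector:
  assumes i: "i < n"
  shows "mat_apply n (two_step_matrix (barrier_graph n S I)) (part_vector S I a b d) i =
    (if i \<in> S then quot_row_S s c a b d else if i \<in> I then quot_row_I s c a b d else quot_row_C s c a b d)"
proof -
  let ?g = "\<lambda>j. two_step_matrix (barrier_graph n S I) i j * part_vector S I a b d j"
  have "(\<Sum>j\<in>S. ?g j) = (\<Sum>j\<in>S. if j = i then 0 else a)"
    using S_sub i disjoint by (intro sum.cong refl) (auto simp: two_step_matrix_def barrier_graph_def part_vector_def)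
  moreover have "(\<Sum>j\<in>I. ?g j) = (\<Sum>j\<in>I. if j = i then 0 else (if i \<in> S then 1 else 2) * d)"
    using I_sub i disjoint by (intro sum.cong refl) (auto simp: two_step_matrix_def barrier_graph_def part_vector_def)
  moreover have "(\<Sum>j\<in>C. ?g j) = (\<Sum>j\<in>C. if j = i then 0 else (if i \<in> I then 2 else 1) * b)"
    using i disjoint unfolding C_def by (intro sum.cong refl) (auto simp: two_step_matrix_def barrier_graph_def part_vector_def)
  ultimately have "mat_apply n (two_step_matrix (barrier_graph n S I)) (part_vector S I a b d) i =
      (real s - (if i \<in> S then 1 else 0)) * a + (real s - (if i \<in> I then 1 else 0)) * ((if i \<in> S then 1 else 2) * d)
      + (real c - (if i \<in> C then 1 else 0)) * ((if i \<in> I then 2 else 1) * b)"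
    unfolding mat_apply_def sum_parts using finite_parts card_S card_I card_C by (simp add: sum_const_off_point)
  also have "\<dots> = (if i \<in> S then quot_row_S s c a b d else if i \<in> I then quot_row_I s c a b d else quot_row_C s c a b d)"
    using disjoint i unfolding quot_row_S_def quot_row_I_def quot_row_C_def C_def by (auto simp: algebra_simps)
  finally show ?thesis .
qed

lemma bilinear_form_part_vector:
  "bilinear_form n (two_step_matrix (barrier_graph n S I)) (part_vector S I a b d) (part_vector S I a b d)
     = quot_form s c a b d"
proof -
  have "bilinear_form n (two_step_matrix (barrier_graph n S I)) (part_vector S I a b d) (part_vector S I a b d)
     = (\<Sum>j\<in>S. a * quot_row_S s c a b d) + (\<Sum>j\<in>I. d * quot_row_I s c a b d) + (\<Sum>j\<in>C. b * quot_row_C s c a b d)"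
    unfolding bilinear_form_mat_apply sum_parts using S_sub I_sub disjoint mat_apply_part_vector
    by (intro arg_cong2[where f = "(+)"] sum.cong refl) (auto simp: part_vector_def C_def)
  then show ?thesis using card_S card_I card_C unfolding quot_form_def by (simp add: algebra_simps)
qed

lemma norm_sq_part_vector: "norm_sq n (part_vector S I a b d) = quot_norm s c a b d"
proof -
  have "norm_sq n (part_vector S I a b d) = (\<Sum>j\<in>S. a\<^sup>2) + (\<Sum>j\<in>I. d\<^sup>2) + (\<Sum>j\<in>C. b\<^sup>2)"
    unfolding norm_sq_def sum_parts using S_sub I_sub disjoint
    by (intro arg_cong2[where f = "(+)"] sum.cong refl) (auto simp: part_vector_def C_def)
  then show ?thesis using card_S card_I card_C unfolding quot_norm_def by (simp add: algebra_simps)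
qed

lemma dist_spectral_radius_subgraph_ge:
  assumes "connected_graph n adj" "\<And>u v. adj u v \<Longrightarrow> barrier_graph n S I u v"
    and "a \<ge> 0" "b \<ge> 0" "d \<ge> 0"
  shows "quot_form s c a b d \<le> dist_spectral_radius n adj * quot_norm s c a b d"
  using dist_spectral_radius_ge_two_step_form[where adj' = "barrier_graph n S I"
      and x = "part_vector S I a b d", OF assms(1,2)] assms(3-5)
  unfolding bilinear_form_part_vector norm_sq_part_vector by (simp add: part_vector_def)

lemma dist_spectral_radius_le:
  assumes s: "s \<ge> 1" and pos: "a > 0" "b > 0" "d > 0"
    and rows: "quot_row_S s c a b d \<le> U * a" "quot_row_C s c a b d \<le> U * b" "quot_row_I s c a b d \<le> U * d"
  shows "dist_spectral_radius n (barrier_graph n S I) \<le> U"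
proof -
  have "S \<noteq> {}" using s card_S by auto
  with S_sub have "dist_spectral_radius n (barrier_graph n S I) = lambda_max n (two_step_matrix (barrier_graph n S I))"
    by (rule dist_spectral_radius_barrier_graph)
  also have "\<dots> \<le> U"
  proof (rule lambda_max_le_Collatz_Wielandt)
    show "n \<ge> 1" using s order by simp
    show "symmetric_on n (two_step_matrix (barrier_graph n S I))"
      by (rule symmetric_on_two_step_matrix) (auto simp: barrier_graph_def)
    show "\<And>i j. 0 \<le> two_step_matrix (barrier_graph n S I) i j" by (simp add: two_step_matrix_def)
    show "\<And>i. 0 < part_vector S I a b d i" using pos by (simp add: part_vector_def)
    show "\<And>i. i < n \<Longrightarrow> mat_apply n (two_step_matrix (barrier_graph n S I)) (part_vector S I a b d) i
        \<le> U * part_vector S I a b d i"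
      using rows by (simp add: mat_apply_part_vector part_vector_def)
  qed
  finally show ?thesis .
qed

end

lemma barrier_partition_of_card:
  assumes "S \<subseteq> {..<n}" "I \<subseteq> {..<n}" "S \<inter> I = {}" "card I = card S"
  shows "barrier_partition n S I (card S) (n - 2 * card S)"
proof -
  have "card (S \<union> I) \<le> n" using assms by (metis card_lessThan card_mono finite_lessThan le_sup_iff)
  then have "2 * card S \<le> n" using assms finite_subset[OF assms(1)] finite_subset[OF assms(2)]
    by (simp add: card_Un_disjoint)
  then show ?thesis using assms by unfold_locales auto
qed

lemma subgraph_barrier_graph_radius_gt_or_iso:
  assumes G: "connected_graph n adj" and sub: "\<And>u v. adj u v \<Longrightarrow> barrier_graph n S I u v"
    and HS: "barrier_partition n S I s c" and H0: "barrier_partition n S0 I0 s c" and s: "s \<ge> 1"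
  shows "dist_spectral_radius n (barrier_graph n S0 I0) < dist_spectral_radius n adj \<or>
    graph_iso n adj (barrier_graph n S0 I0)"
proof -
  interpret HS: barrier_partition n S I s c by (rule HS)
  interpret H0: barrier_partition n S0 I0 s c by (rule H0)
  obtain f where f: "bij_betw f {..<n} {..<n}" "f ` S = S0" "f ` I = I0"
    using exists_bij_betw_parts[OF HS.S_sub HS.I_sub HS.disjoint H0.S_sub H0.I_sub H0.disjoint]
      HS.card_S HS.card_I H0.card_S H0.card_I by metis
  have iso: "barrier_graph n S I u v \<longleftrightarrow> barrier_graph n S0 I0 (f u) (f v)" if "u < n" "v < n" for u v
    using barrier_graph_permute[OF f(1) HS.S_sub HS.I_sub f(2,3) that] .
  show ?thesis
  proof (cases "\<exists>u<n. \<exists>v<n. barrier_graph n S I u v \<and> \<not> adj u v")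
    case True
    then obtain u v where "u < n" "v < n" "barrier_graph n S I u v" "\<not> adj u v" by blast
    then have "lambda_max n (two_step_matrix (barrier_graph n S I)) < dist_spectral_radius n adj"
      by (intro dist_spectral_radius_gt_two_step[OF G _ graph_barrier_graph]) (use sub in auto)
    moreover have "S0 \<noteq> {}" using s H0.card_S by auto
    then have "dist_spectral_radius n (barrier_graph n S0 I0) = lambda_max n (two_step_matrix (barrier_graph n S I))"
      using dist_spectral_radius_barrier_graph[OF H0.S_sub] lambda_max_two_step_matrix_iso[where
          adj = "barrier_graph n S I" and adj' = "barrier_graph n S0 I0", OF f(1) iso] by simp
    ultimately show ?thesis by simp
  next
    case False
    then have "adj u v \<longleftrightarrow> barrier_graph n S0 I0 (f u) (f v)" if "u < n" "v < n" for u v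
      using sub iso that by blast
    then show ?thesis using f(1) unfolding graph_iso_def atLeast0LessThan by blast
  qed
qed

lemma no_nonempty_k_barrier:
  assumes G: "connected_graph n adj" and k: "even k" "0 < k"
    and H0: "barrier_partition n S0 I0 s0 c0"
    and le: "dist_spectral_radius n adj \<le> dist_spectral_radius n (barrier_graph n S0 I0)"
    and not_iso: "\<not> graph_iso n adj (barrier_graph n S0 I0)"
    and gap: "\<And>s c. 1 \<le> s \<Longrightarrow> n = 2 * s + c \<Longrightarrow> s \<noteq> s0 \<Longrightarrow> \<exists>a b d. 0 \<le> a \<and> 0 \<le> b \<and> 0 \<le> d \<and>
       dist_spectral_radius n (barrier_graph n S0 I0) * quot_norm s c a b d < quot_form s c a b d"
  shows "\<nexists>S. S \<noteq> {} \<and> k_barrier k n adj S"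
proof
  assume "\<exists>S. S \<noteq> {} \<and> k_barrier k n adj S"
  then obtain S where S: "S \<noteq> {}" "k_barrier k n adj S" by blast
  have "graph n adj" using G unfolding connected_graph_def by simp
  then obtain I where I: "S \<subseteq> {..<n}" "I \<subseteq> {..<n}" "S \<inter> I = {}" "card I = card S"
    and sub: "\<And>u v. adj u v \<Longrightarrow> barrier_graph n S I u v"
    using nonempty_k_barrier_subgraph_barrier_graph[OF _ k S] by blast
  define s where "s = card S"
  have HS: "barrier_partition n S I s (n - 2 * s)"
    unfolding s_def using I by (rule barrier_partition_of_card)
  have s: "s \<ge> 1" using S(1) finite_subset[OF I(1)] unfolding s_def by (simp add: Suc_le_eq card_gt_0_iff)
  show False
  proof (cases "s = s0")
    case True
    then have "barrier_partition n S0 I0 s (n - 2 * s)"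
      using H0 barrier_partition.order[OF H0] by simp
    then show False
      using subgraph_barrier_graph_radius_gt_or_iso[OF G sub HS _ s] le not_iso by fastforce
  next
    case False
    then obtain a b d where abd: "0 \<le> a" "0 \<le> b" "0 \<le> d"
      and less: "dist_spectral_radius n (barrier_graph n S0 I0) * quot_norm s (n - 2 * s) a b d
          < quot_form s (n - 2 * s) a b d"
      using gap[OF s barrier_partition.order[OF HS]] by blast
    have "quot_form s (n - 2 * s) a b d \<le> dist_spectral_radius n adj * quot_norm s (n - 2 * s) a b d"
      using barrier_partition.dist_spectral_radius_subgraph_ge[OF HS G sub abd] .
    also have "\<dots> \<le> dist_spectral_radius n (barrier_graph n S0 I0) * quot_norm s (n - 2 * s) a b d"
      using le quot_norm_nonneg by (rule mult_right_mono)
    finally show False using less by simp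
  qed
qed

section \<open>Numerical certificates\<close>

text \<open>The bounds below separate the extremal radius from the radii of the other members of the
  family.  The certificates were found numerically: a lower certificate \<open>((s, c), a, b, d)\<close> is a test
  vector at which the Rayleigh quotient of \<open>K\<^sub>s \<or> (K\<^sub>c \<union> sK\<^sub>1)\<close> exceeds the bound, an upper
  certificate \<open>(n, a, b, d)\<close> a positive Collatz--Wielandt vector of the extremal graph.\<close>

definition K1_join_bound :: "nat \<Rightarrow> real" where
  "K1_join_bound n = (if 5 \<le> n \<and> n \<le> 14 then
     [5347/1000, 3267/500, 307/40, 2197/250, 4941/500, 5481/500, 12031/1000, 1309/100, 14143/1000,
      15189/1000] ! (n - 5) else real n + 2)"

definition K1_join_upper_certs :: "(nat \<times> real \<times> real \<times> real) list" where
  "K1_join_upper_certs =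
     [(5, 6283/10000, 393/500, 1), (6, 1517/2500, 7397/10000, 1), (7, 5919/10000, 7073/10000, 1),
      (8, 363/625, 6831/10000, 1), (9, 5723/10000, 6643/10000, 1), (10, 1131/2000, 1623/2500, 1),
      (11, 5599/10000, 6367/10000, 1), (12, 347/625, 3131/5000, 1), (13, 5513/10000, 6173/10000, 1),
      (14, 2739/5000, 381/625, 1)]"

definition K1_join_lower_certs :: "((nat \<times> nat) \<times> real \<times> real \<times> real) list" where
  "K1_join_lower_certs =
     [((2, 1), 343/500, 1, 1), ((2, 3), 621/1000, 837/1000, 1), ((3, 1), 667/1000, 1, 1),
      ((2, 5), 593/1000, 381/500, 1), ((3, 3), 309/500, 867/1000, 1), ((4, 1), 82/125, 1, 1),
      ((2, 6), 583/1000, 737/1000, 1), ((3, 4), 121/200, 207/250, 1), ((4, 2), 633/1000, 187/200, 1),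
      ((5, 0), 313/500, 1, 37/40), ((2, 7), 72/125, 717/1000, 1), ((3, 5), 297/500, 399/500, 1),
      ((4, 3), 617/1000, 111/125, 1), ((5, 1), 649/1000, 1, 1), ((2, 8), 57/100, 7/10, 1),
      ((3, 6), 293/500, 773/1000, 1), ((4, 4), 121/200, 213/250, 1), ((5, 2), 63/100, 118/125, 1),
      ((6, 0), 5/8, 1, 469/500), ((2, 9), 113/200, 343/500, 1), ((3, 7), 579/1000, 753/1000, 1),
      ((4, 5), 149/250, 823/1000, 1), ((5, 3), 617/1000, 451/500, 1), ((6, 1), 161/250, 1, 1),
      ((2, 10), 14/25, 337/500, 1), ((3, 8), 287/500, 92/125, 1), ((4, 6), 589/1000, 4/5, 1),
      ((5, 4), 303/500, 869/1000, 1), ((6, 2), 157/250, 951/1000, 1), ((7, 0), 78/125, 1, 473/500)]"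

definition S_half_bound :: "nat \<Rightarrow> real" where
  "S_half_bound n = [3563/1000, 6163/1000, 8773/1000] ! (n div 2 - 2)"

definition S_half_upper_certs :: "(nat \<times> real \<times> real \<times> real) list" where
  "S_half_upper_certs =
     [(4, 1601/2500, 60, 4101/5000), (6, 253/400, 120, 351/400), (8, 6287/10000, 200, 567/625)]"

definition S_half_lower_certs :: "((nat \<times> nat) \<times> real \<times> real \<times> real) list" where
  "S_half_lower_certs =
     [((1, 2), 6631/10000, 8591/10000, 1), ((1, 4), 1517/2500, 7397/10000, 1),
      ((2, 2), 1613/2500, 2247/2500, 1), ((1, 6), 363/625, 6831/10000, 1),
      ((2, 4), 3023/5000, 397/500, 1), ((3, 2), 3187/5000, 4603/5000, 1)]"


lemma K1_join_upper_certs_valid: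
  "list_all (\<lambda>(n, a, b, d). 0 < a \<and> 0 < b \<and> 0 < d \<and>
     quot_row_S 1 (n - 2) a b d \<le> K1_join_bound n * a \<and> quot_row_C 1 (n - 2) a b d \<le> K1_join_bound n * b \<and>
     quot_row_I 1 (n - 2) a b d \<le> K1_join_bound n * d) K1_join_upper_certs"
  by (simp add: K1_join_upper_certs_def K1_join_bound_def quot_row_S_def quot_row_C_def quot_row_I_def)

lemma K1_join_lower_certs_valid:
  "list_all (\<lambda>((s, c), a, b, d). 0 \<le> a \<and> 0 \<le> b \<and> 0 \<le> d \<and>
     K1_join_bound (2 * s + c) * quot_norm s c a b d < quot_form s c a b d) K1_join_lower_certs"
  by (simp add: K1_join_lower_certs_def K1_join_bound_def quot_form_def quot_norm_def quot_row_S_def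
      quot_row_C_def quot_row_I_def power2_eq_square)

lemma S_half_upper_certs_valid:
  "list_all (\<lambda>(n, a, b, d). 0 < a \<and> 0 < b \<and> 0 < d \<and>
     quot_row_S (n div 2) 0 a b d \<le> S_half_bound n * a \<and> quot_row_C (n div 2) 0 a b d \<le> S_half_bound n * b \<and>
     quot_row_I (n div 2) 0 a b d \<le> S_half_bound n * d) S_half_upper_certs"
  by (simp add: S_half_upper_certs_def S_half_bound_def quot_row_S_def quot_row_C_def quot_row_I_def)

lemma S_half_lower_certs_valid:
  "list_all (\<lambda>((s, c), a, b, d). 0 \<le> a \<and> 0 \<le> b \<and> 0 \<le> d \<and>
     S_half_bound (2 * s + c) * quot_norm s c a b d < quot_form s c a b d) S_half_lower_certs"
  by (simp add: S_half_lower_certs_def S_half_bound_def quot_form_def quot_norm_def quot_row_S_def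
      quot_row_C_def quot_row_I_def power2_eq_square)

lemma K1_join_lower_certs_cover:
  assumes "2 \<le> s" "2 * s + c \<le> 14" "odd (2 * s + c) \<or> 10 \<le> 2 * s + c"
  shows "(s, c) \<in> fst ` set K1_join_lower_certs"
  using assms unfolding K1_join_lower_certs_def by simp presburger

lemma K1_join_upper_certs_cover:
  "5 \<le> n \<Longrightarrow> n \<le> 14 \<Longrightarrow> n \<in> fst ` set K1_join_upper_certs"
  unfolding K1_join_upper_certs_def by simp presburger

lemma S_half_lower_certs_cover:
  assumes "1 \<le> s" "0 < c" "2 * s + c \<in> {4, 6, 8}"
  shows "(s, c) \<in> fst ` set S_half_lower_certs"
  using assms unfolding S_half_lower_certs_def by simp presburger

lemma list_all_fst_image: "list_all P L \<Longrightarrow> k \<in> fst ` set L \<Longrightarrow> \<exists>w. P (k, w)"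
  by (auto simp: list_all_iff)

lemma dist_spectral_radius_K1_join_Kn2_K1_le:
  assumes n: "3 \<le> n"
  shows "dist_spectral_radius n (K1_join_Kn2_K1 n) \<le> K1_join_bound n"
proof -
  interpret barrier_partition n "{0}" "{n - 1}" 1 "n - 2" using n by unfold_locales auto
  have "\<exists>a b d. 0 < a \<and> 0 < b \<and> 0 < d \<and>
    quot_row_S 1 (n - 2) a b d \<le> K1_join_bound n * a \<and> quot_row_C 1 (n - 2) a b d \<le> K1_join_bound n * b \<and>
    quot_row_I 1 (n - 2) a b d \<le> K1_join_bound n * d"
  proof (cases "5 \<le> n \<and> n \<le> 14")
    case True
    then show ?thesis
      using list_all_fst_image[OF K1_join_upper_certs_valid K1_join_upper_certs_cover]
      by (simp add: split_paired_Ex)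
  next
    case False
    then have "K1_join_bound n = real n + 2" unfolding K1_join_bound_def by auto
    then show ?thesis
      using n by (intro exI[of _ 1] exI[of _ 2]) (simp add: quot_row_S_def quot_row_C_def quot_row_I_def of_nat_diff)
  qed
  then show ?thesis using n K1_join_Kn2_K1_eq_barrier_graph dist_spectral_radius_le by auto
qed

lemma K1_join_bound_lt_quot_form:
  assumes s: "2 \<le> s" and n: "odd (2 * s + c) \<or> 10 \<le> 2 * s + c"
  shows "\<exists>a b d. 0 \<le> a \<and> 0 \<le> b \<and> 0 \<le> d \<and>
    K1_join_bound (2 * s + c) * quot_norm s c a b d < quot_form s c a b d"
proof (cases "2 * s + c \<le> 14")
  case True
  show ?thesis
    using list_all_fst_image[OF K1_join_lower_certs_valid K1_join_lower_certs_cover[OF s True n]]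
    by (simp add: split_paired_Ex)
next
  case False
  text \<open>At the all-ones vector the difference of the two sides is \<open>s\<^sup>2 + 2sc - 7s - 3c\<close>.\<close>
  have "7 * s + 3 * c < s * s + 2 * s * c"
  proof (cases "s \<ge> 8")
    case True
    then have "8 * s \<le> s * s" "3 * c \<le> 2 * s * c" using s by simp_all
    then show ?thesis using s by linarith
  next
    case False
    then have "s = 2 \<or> s = 3 \<or> s = 4 \<or> s = 5 \<or> s = 6 \<or> s = 7" using s by linarith
    then show ?thesis using \<open>\<not> 2 * s + c \<le> 14\<close> by (elim disjE) simp_all
  qed
  then have "real (7 * s + 3 * c) < real (s * s + 2 * s * c)" by (simp only: of_nat_less_iff)
  moreover have "K1_join_bound (2 * s + c) = real (2 * s + c) + 2" using False unfolding K1_join_bound_def by auto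
  ultimately have "K1_join_bound (2 * s + c) * quot_norm s c 1 1 1 < quot_form s c 1 1 1"
    unfolding quot_form_def quot_norm_def quot_row_S_def quot_row_C_def quot_row_I_def by (simp add: algebra_simps)
  then show ?thesis by (intro exI[of _ 1]) simp
qed

lemma dist_spectral_radius_S_half_le:
  assumes n: "n \<in> {4, 6, 8}"
  shows "dist_spectral_radius n (S_graph n (n div 2)) \<le> S_half_bound n"
proof -
  interpret barrier_partition n "{..<n div 2}" "{n div 2..<n}" "n div 2" 0 using n by unfold_locales auto
  have cert: "n \<in> fst ` set S_half_upper_certs" using n unfolding S_half_upper_certs_def by auto
  obtain a b d where "0 < a" "0 < b" "0 < d"
    "quot_row_S (n div 2) 0 a b d \<le> S_half_bound n * a" "quot_row_C (n div 2) 0 a b d \<le> S_half_bound n * b"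
    "quot_row_I (n div 2) 0 a b d \<le> S_half_bound n * d"
    using list_all_fst_image[OF S_half_upper_certs_valid cert] by (auto simp: split_paired_Ex)
  moreover have "1 \<le> n div 2" using n by auto
  ultimately show ?thesis unfolding S_graph_eq_barrier_graph by (intro dist_spectral_radius_le)
qed

lemma S_half_bound_lt_quot_form:
  assumes "1 \<le> s" "0 < c" "2 * s + c \<in> {4, 6, 8}"
  shows "\<exists>a b d. 0 \<le> a \<and> 0 \<le> b \<and> 0 \<le> d \<and>
    S_half_bound (2 * s + c) * quot_norm s c a b d < quot_form s c a b d"
  using list_all_fst_image[OF S_half_lower_certs_valid S_half_lower_certs_cover[OF assms]]
  by (simp add: split_paired_Ex)


lemma K1_join_Kn2_K1_no_nonempty_k_barrier:
  assumes G: "connected_graph n adj" and k: "even k" "0 < k" and n: "3 \<le> n" "odd n \<or> 10 \<le> n"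
    and le: "dist_spectral_radius n adj \<le> dist_spectral_radius n (K1_join_Kn2_K1 n)"
    and not_iso: "\<not> graph_iso n adj (K1_join_Kn2_K1 n)"
  shows "\<nexists>S. S \<noteq> {} \<and> k_barrier k n adj S"
proof -
  have H: "K1_join_Kn2_K1 n = barrier_graph n {0} {n - 1}"
    using n by (simp add: K1_join_Kn2_K1_eq_barrier_graph)
  have "barrier_partition n {0} {n - 1} 1 (n - 2)" using n by unfold_locales auto
  then show ?thesis
  proof (rule no_nonempty_k_barrier[OF G k _ le[unfolded H] not_iso[unfolded H]])
    fix s c assume "1 \<le> s" "n = 2 * s + c" "s \<noteq> 1"
    then obtain a b d where abd: "0 \<le> a" "0 \<le> b" "0 \<le> d"
      and less: "K1_join_bound n * quot_norm s c a b d < quot_form s c a b d"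
      using K1_join_bound_lt_quot_form[of s c] n by auto
    have "dist_spectral_radius n (barrier_graph n {0} {n - 1}) * quot_norm s c a b d
        \<le> K1_join_bound n * quot_norm s c a b d"
      using dist_spectral_radius_K1_join_Kn2_K1_le[OF n(1)] quot_norm_nonneg
      unfolding H by (rule mult_right_mono)
    then show "\<exists>a b d. 0 \<le> a \<and> 0 \<le> b \<and> 0 \<le> d \<and>
        dist_spectral_radius n (barrier_graph n {0} {n - 1}) * quot_norm s c a b d < quot_form s c a b d"
      using abd less by force
  qed
qed

lemma S_half_no_nonempty_k_barrier:
  assumes G: "connected_graph n adj" and k: "even k" "0 < k" and n: "n \<in> {4, 6, 8}"
    and le: "dist_spectral_radius n adj \<le> dist_spectral_radius n (S_graph n (n div 2))"
    and not_iso: "\<not> graph_iso n adj (S_graph n (n div 2))"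
  shows "\<nexists>S. S \<noteq> {} \<and> k_barrier k n adj S"
proof -
  have H: "S_graph n (n div 2) = barrier_graph n {..<n div 2} {n div 2..<n}"
    by (rule S_graph_eq_barrier_graph)
  have "barrier_partition n {..<n div 2} {n div 2..<n} (n div 2) 0" using n by unfold_locales auto
  then show ?thesis
  proof (rule no_nonempty_k_barrier[OF G k _ le[unfolded H] not_iso[unfolded H]])
    fix s c assume "1 \<le> s" "n = 2 * s + c" "s \<noteq> n div 2"
    then have "0 < c" by auto
    then obtain a b d where abd: "0 \<le> a" "0 \<le> b" "0 \<le> d"
      and less: "S_half_bound n * quot_norm s c a b d < quot_form s c a b d"
      using S_half_bound_lt_quot_form[of s c] \<open>1 \<le> s\<close> \<open>n = 2 * s + c\<close> n by auto
    have "dist_spectral_radius n (barrier_graph n {..<n div 2} {n div 2..<n}) * quot_norm s c a b d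
        \<le> S_half_bound n * quot_norm s c a b d"
      using dist_spectral_radius_S_half_le[OF n] quot_norm_nonneg
      unfolding H by (rule mult_right_mono)
    then show "\<exists>a b d. 0 \<le> a \<and> 0 \<le> b \<and> 0 \<le> d \<and>
        dist_spectral_radius n (barrier_graph n {..<n div 2} {n div 2..<n}) * quot_norm s c a b d
          < quot_form s c a b d"
      using abd less by force
  qed
qed

theorem theorem5:
  fixes k n :: nat and adj :: "nat \<Rightarrow> nat \<Rightarrow> bool"
  assumes "even k" and "k \<ge> 2"
    and "connected_graph n adj" and "n \<ge> 3"
  shows "(dist_spectral_radius n adj \<le> dist_spectral_radius n (K1_join_Kn2_K1 n) \<and>
          \<not> graph_iso n adj (K1_join_Kn2_K1 n) \<longrightarrow>
            (odd n \<longrightarrow> GFC k n adj) \<and> (even n \<and> n \<ge> 10 \<longrightarrow> GBC k n adj))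
       \<and> (even n \<and> 4 \<le> n \<and> n \<le> 8 \<and>
          dist_spectral_radius n adj \<le> dist_spectral_radius n (S_graph n (n div 2)) \<longrightarrow>
            GBC k n adj \<or> graph_iso n adj (S_graph n (n div 2)))"
proof -
  have k: "even k" "0 < k" using assms(1,2) by simp_all
  show ?thesis
  proof (intro conjI impI)
    assume "dist_spectral_radius n adj \<le> dist_spectral_radius n (K1_join_Kn2_K1 n) \<and>
      \<not> graph_iso n adj (K1_join_Kn2_K1 n)"
    then have "\<nexists>S. S \<noteq> {} \<and> k_barrier k n adj S" if "odd n \<or> 10 \<le> n"
      using K1_join_Kn2_K1_no_nonempty_k_barrier[OF assms(3) k assms(4) that] by blast
    then show "odd n \<Longrightarrow> GFC k n adj" "even n \<and> n \<ge> 10 \<Longrightarrow> GBC k n adj"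
      using assms(3) unfolding GFC_def GBC_def by auto
  next
    assume n: "even n \<and> 4 \<le> n \<and> n \<le> 8 \<and>
      dist_spectral_radius n adj \<le> dist_spectral_radius n (S_graph n (n div 2))"
    then have "n \<in> {4, 6, 8}" by auto
    then show "GBC k n adj \<or> graph_iso n adj (S_graph n (n div 2))"
      using S_half_no_nonempty_k_barrier[OF assms(3) k] n assms(3) unfolding GBC_def by blast
  qed
qed

end
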